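(* In the Cross Model on $\mathbb{Z}_K$, for every configuration and all integers $K\ge1$, $n\ge0$, there exists a path of open edges from $(0,0)$ to $(n,0)$ of minimal length (among open paths in $\mathbb{Z}_K$) which uses only horizontal and diagonal edges, except possibly for vertical edges lying in the first column $\{0\}\times[\![-K,K]\!]$.
   Context: Cross Model: $\mathbb{Z}_K=\mathbb{Z}\times[\![-K,K]\!]$ with vertical edges $(i,j)\to(i,j+1)$, horizontal edges $(i,j)\to(i+1,j)$ and diagonal edges $(i,j)\to(i+1,j\pm1)$ (within the strip). Vertical and horizontal edges have length $1$, diagonal edges length $2$. All vertical and diagonal edges are open; each horizontal edge is open or closed (randomly, open with probability $1-\varepsilon$ independently). The length of a path is the sum of the lengths of its edges. *)

theory Defs
  imports Main
begin

type_synonym vertex = "int \<times> int"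

text \<open>Configuration: \<omega> (i,j) says whether the horizontal edge (i,j)--(i+1,j) is open.\<close>
type_synonym config = "int \<times> int \<Rightarrow> bool"

definition in_strip :: "int \<Rightarrow> vertex \<Rightarrow> bool" where
  "in_strip K v \<longleftrightarrow> \<bar>snd v\<bar> \<le> K"

definition vertical_edge :: "vertex \<Rightarrow> vertex \<Rightarrow> bool" where
  "vertical_edge u v \<longleftrightarrow> fst u = fst v \<and> \<bar>snd u - snd v\<bar> = 1"

definition horizontal_edge :: "vertex \<Rightarrow> vertex \<Rightarrow> bool" where
  "horizontal_edge u v \<longleftrightarrow> snd u = snd v \<and> \<bar>fst u - fst v\<bar> = 1"

definition diagonal_edge :: "vertex \<Rightarrow> vertex \<Rightarrow> bool" where
  "diagonal_edge u v \<longleftrightarrow> \<bar>fst u - fst v\<bar> = 1 \<and> \<bar>snd u - snd v\<bar> = 1"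

definition open_step :: "int \<Rightarrow> config \<Rightarrow> vertex \<Rightarrow> vertex \<Rightarrow> bool" where
  "open_step K \<omega> u v \<longleftrightarrow> in_strip K u \<and> in_strip K v \<and>
     (vertical_edge u v \<or> diagonal_edge u v \<or>
      (horizontal_edge u v \<and> \<omega> (min (fst u) (fst v), snd u)))"

definition edge_length :: "vertex \<Rightarrow> vertex \<Rightarrow> nat" where
  "edge_length u v = (if diagonal_edge u v then 2 else 1)"

definition open_path :: "int \<Rightarrow> config \<Rightarrow> vertex \<Rightarrow> vertex \<Rightarrow> vertex list \<Rightarrow> bool" where
  "open_path K \<omega> a b p \<longleftrightarrow> p \<noteq> [] \<and> hd p = a \<and> last p = b \<and>
     (\<forall>i < length p - 1. open_step K \<omega> (p ! i) (p ! Suc i))"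

definition path_length :: "vertex list \<Rightarrow> nat" where
  "path_length p = (\<Sum>i < length p - 1. edge_length (p ! i) (p ! Suc i))"

end

theory Submission
  imports Defs
begin

text \<open>Let \<open>c(m, j)\<close> be the length of the cheapest open path from \<open>(0, 0)\<close> to \<open>(m, j)\<close>
  that climbs column 0 and afterwards only takes horizontal or diagonal steps to the right;
  it obeys a Bellman recursion over the columns and is attained by such a path. Within a column
  \<open>c\<close> is 1-Lipschitz in \<open>j\<close>, and stepping back one column lowers it by at most one. Hence the
  potential equal to \<open>c\<close> on columns \<open>m \<ge> 0\<close> and to \<open>|m| + |j|\<close> left of column 0 grows by at
  most the edge length along every open edge, so summing along any open path from \<open>(0, 0)\<close> to
  \<open>(n, 0)\<close> shows that it is at least \<open>c(n, 0)\<close> long.\<close>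

lemma open_path_iff_successively:
  "open_path K \<omega> a b p \<longleftrightarrow>
     p \<noteq> [] \<and> hd p = a \<and> last p = b \<and> successively (open_step K \<omega>) p"
  unfolding open_path_def successively_conv_nth less_diff_conv by simp

lemma open_path_singleton: "open_path K \<omega> a a [a]"
  by (simp add: open_path_iff_successively)

lemma open_path_snoc:
  "open_path K \<omega> a b p \<Longrightarrow> open_step K \<omega> b c \<Longrightarrow> open_path K \<omega> a c (p @ [c])"
  by (auto simp: open_path_iff_successively successively_append_iff)

lemma path_length_singleton: "path_length [a] = 0"
  by (simp add: path_length_def)

lemma path_length_snoc:
  assumes "p \<noteq> []"
  shows "path_length (p @ [c]) = path_length p + edge_length (last p) c"
proof -
  have "path_length (p @ [c]) = (\<Sum>i < length p. edge_length ((p @ [c]) ! i) ((p @ [c]) ! Suc i))"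
    by (simp add: path_length_def)
  also have "\<dots> = (\<Sum>i < length p - 1. edge_length (p ! i) (p ! Suc i)) + edge_length (last p) c"
    using assms by (cases p rule: rev_cases) (auto simp: nth_append intro!: sum.cong)
  finally show ?thesis by (simp add: path_length_def)
qed

lemma potential_le_path_length:
  fixes f :: "vertex \<Rightarrow> int"
  assumes step: "\<And>u v. open_step K \<omega> u v \<Longrightarrow> f v \<le> f u + int (edge_length u v)"
    and path: "open_path K \<omega> a b p"
  shows "f b \<le> f a + int (path_length p)"
proof -
  define n where "n = length p - 1"
  have ends: "p ! 0 = a" "p ! n = b"
    using path by (auto simp: open_path_def n_def hd_conv_nth last_conv_nth)
  have "f b - f a = (\<Sum>i < n. f (p ! Suc i) - f (p ! i))"
    using sum_lessThan_telescope[of "\<lambda>i. f (p ! i)" n] by (simp add: ends)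
  also have "\<dots> \<le> (\<Sum>i < n. int (edge_length (p ! i) (p ! Suc i)))"
    using path step by (intro sum_mono) (auto simp: open_path_def n_def algebra_simps)
  also have "\<dots> = int (path_length p)"
    by (simp add: path_length_def n_def)
  finally show ?thesis by simp
qed

fun rightward_cost :: "int \<Rightarrow> config \<Rightarrow> nat \<Rightarrow> int \<Rightarrow> int" where
  "rightward_cost K \<omega> 0 j = \<bar>j\<bar>"
| "rightward_cost K \<omega> (Suc m) j = Min
     ((if \<bar>j - 1\<bar> \<le> K then {rightward_cost K \<omega> m (j - 1) + 2} else {}) \<union>
      (if \<bar>j + 1\<bar> \<le> K then {rightward_cost K \<omega> m (j + 1) + 2} else {}) \<union>
      (if \<bar>j\<bar> \<le> K \<and> \<omega> (int m, j) then {rightward_cost K \<omega> m j + 1} else {}))"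

declare rightward_cost.simps(2) [simp del]

lemma rightward_cost_diagonal_le:
  assumes "\<bar>j'\<bar> \<le> K" "\<bar>j - j'\<bar> = 1"
  shows "rightward_cost K \<omega> (Suc m) j \<le> rightward_cost K \<omega> m j' + 2"
proof -
  have "j' = j - 1 \<or> j' = j + 1" using assms(2) by arith
  then show ?thesis using assms by (auto simp: rightward_cost.simps(2) intro!: Min_le)
qed

lemma rightward_cost_horizontal_le:
  "\<bar>j\<bar> \<le> K \<Longrightarrow> \<omega> (int m, j) \<Longrightarrow> rightward_cost K \<omega> (Suc m) j \<le> rightward_cost K \<omega> m j + 1"
  by (auto simp: rightward_cost.simps(2) intro!: Min_le)

lemma rightward_cost_SucE:
  assumes "\<bar>j\<bar> \<le> K" "K \<ge> 1"
  obtains (diagonal) j' where "\<bar>j'\<bar> \<le> K" "\<bar>j - j'\<bar> = 1"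
      "rightward_cost K \<omega> (Suc m) j = rightward_cost K \<omega> m j' + 2"
  | (horizontal) "\<omega> (int m, j)" "rightward_cost K \<omega> (Suc m) j = rightward_cost K \<omega> m j + 1"
proof -
  define A where "A = (if \<bar>j - 1\<bar> \<le> K then {rightward_cost K \<omega> m (j - 1) + 2} else {}) \<union>
      (if \<bar>j + 1\<bar> \<le> K then {rightward_cost K \<omega> m (j + 1) + 2} else {}) \<union>
      (if \<bar>j\<bar> \<le> K \<and> \<omega> (int m, j) then {rightward_cost K \<omega> m j + 1} else {})"
  have "A \<noteq> {}"
    unfolding A_def using assms by auto
  moreover have "rightward_cost K \<omega> (Suc m) j = Min A"
    unfolding A_def by (simp add: rightward_cost.simps(2))
  ultimately have "rightward_cost K \<omega> (Suc m) j \<in> A"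
    using Min_in[of A] by (simp add: A_def)
  then show thesis
    unfolding A_def using diagonal[of "j - 1"] diagonal[of "j + 1"] horizontal
    by (auto split: if_splits)
qed

lemma rightward_cost_neighbour_le:
  assumes "K \<ge> 1"
  shows "\<bar>j\<bar> \<le> K \<Longrightarrow> \<bar>j'\<bar> \<le> K \<Longrightarrow> \<bar>j - j'\<bar> \<le> 1 \<Longrightarrow>
    rightward_cost K \<omega> m j' \<le> rightward_cost K \<omega> m j + 1"
proof (induction m arbitrary: j j')
  case 0
  then show ?case by simp
next
  case (Suc m)
  have "rightward_cost K \<omega> m j + 1 \<le> rightward_cost K \<omega> (Suc m) j"
    using \<open>\<bar>j\<bar> \<le> K\<close> assms
  proof (cases rule: rightward_cost_SucE[where \<omega> = \<omega> and m = m])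
    case (diagonal i)
    then show ?thesis using Suc.IH[of i j] Suc.prems by (simp add: abs_minus_commute)
  qed simp
  moreover have "rightward_cost K \<omega> (Suc m) j' \<le> rightward_cost K \<omega> m j + 2"
    if "j' \<noteq> j"
    using rightward_cost_diagonal_le[of j K j'] that Suc.prems by simp
  ultimately show ?case by (cases "j' = j") auto
qed

lemma rightward_cost_lipschitz:
  assumes "K \<ge> 1" "\<bar>j\<bar> \<le> K" "\<bar>j'\<bar> \<le> K"
  shows "rightward_cost K \<omega> m j' \<le> rightward_cost K \<omega> m j + \<bar>j - j'\<bar>"
  using assms(3)
proof (induction "nat \<bar>j - j'\<bar>" arbitrary: j')
  case 0
  then show ?case by simp
next
  case (Suc d)
  define j'' where "j'' = (if j' < j then j' + 1 else j' - 1)"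
  have "nat \<bar>j - j''\<bar> = d" "\<bar>j - j'\<bar> = \<bar>j - j''\<bar> + 1" "\<bar>j''\<bar> \<le> K" "\<bar>j'' - j'\<bar> \<le> 1"
    using Suc.hyps(2) Suc.prems assms(2) unfolding j''_def by auto
  then show ?case
    using Suc.hyps(1)[of j''] rightward_cost_neighbour_le[OF assms(1), of j'' j' \<omega> m] Suc.prems
    by linarith
qed

lemma rightward_cost_backward_le:
  assumes "K \<ge> 1" "\<bar>b\<bar> \<le> K" "\<bar>d\<bar> \<le> K" "\<bar>b - d\<bar> \<le> 1"
  shows "rightward_cost K \<omega> m d \<le> rightward_cost K \<omega> (Suc m) b + 1"
  using assms(2,1)
proof (cases rule: rightward_cost_SucE[where \<omega> = \<omega> and m = m])
  case (diagonal i)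
  then show ?thesis
    using rightward_cost_lipschitz[OF assms(1) \<open>\<bar>i\<bar> \<le> K\<close> assms(3), of \<omega> m] assms(4) by linarith
next
  case horizontal
  then show ?thesis
    using rightward_cost_lipschitz[OF assms(1,2,3), of \<omega> m] assms(4) by linarith
qed

lemma open_stepE:
  assumes "open_step K \<omega> (a, b) (c, d)"
  obtains (vertical) "c = a" "\<bar>b - d\<bar> = 1" "edge_length (a, b) (c, d) = 1"
  | (diagonal) "\<bar>a - c\<bar> = 1" "\<bar>b - d\<bar> = 1" "edge_length (a, b) (c, d) = 2"
  | (horizontal) "d = b" "\<bar>a - c\<bar> = 1" "\<omega> (min a c, b)" "edge_length (a, b) (c, d) = 1"
  using assms
  unfolding open_step_def vertical_edge_def diagonal_edge_def horizontal_edge_def edge_length_def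
  by auto

definition potential :: "int \<Rightarrow> config \<Rightarrow> vertex \<Rightarrow> int" where
  "potential K \<omega> v =
     (if fst v \<le> 0 then \<bar>fst v\<bar> + \<bar>snd v\<bar> else rightward_cost K \<omega> (nat (fst v)) (snd v))"

lemma potential_right_half: "0 \<le> a \<Longrightarrow> potential K \<omega> (a, b) = rightward_cost K \<omega> (nat a) b"
  by (auto simp: potential_def)

lemma potential_open_step:
  assumes K: "K \<ge> 1" and step: "open_step K \<omega> u v"
  shows "potential K \<omega> v \<le> potential K \<omega> u + int (edge_length u v)"
proof -
  obtain a b c d where uv: "u = (a, b)" "v = (c, d)"
    by fastforce
  have st: "open_step K \<omega> (a, b) (c, d)" and strip: "\<bar>b\<bar> \<le> K" "\<bar>d\<bar> \<le> K"
    using step uv by (auto simp: open_step_def in_strip_def)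
  consider (left) "a \<le> 0" "c \<le> 0" | (same) "c = a" "a > 0"
    | (forward) "c = a + 1" "a \<ge> 0" | (backward) "a = c + 1" "c \<ge> 0"
    using st by (cases rule: open_stepE) arith+
  then show ?thesis
  proof cases
    case left
    from st show ?thesis
      by (cases rule: open_stepE) (use left uv in \<open>auto simp: potential_def\<close>)
  next
    case same
    from st show ?thesis
    proof (cases rule: open_stepE)
      case vertical
      then show ?thesis
        using rightward_cost_neighbour_le[OF K strip, of \<omega> "nat a"] same uv
        by (simp add: potential_right_half)
    qed (use same in auto)
  next
    case forward
    have Suc: "nat c = Suc (nat a)"
      using forward by simp
    from st show ?thesis
    proof (cases rule: open_stepE)
      case diagonal
      then show ?thesis
        using rightward_cost_diagonal_le[of b K d \<omega> "nat a"] strip forward uv Suc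
        by (simp add: potential_right_half abs_minus_commute)
    next
      case horizontal
      then show ?thesis
        using rightward_cost_horizontal_le[of b K \<omega> "nat a"] strip forward uv Suc
        by (simp add: potential_right_half)
    qed (use forward in auto)
  next
    case backward
    have Suc: "nat a = Suc (nat c)"
      using backward by simp
    have "\<bar>b - d\<bar> \<le> 1" "edge_length (a, b) (c, d) \<ge> 1"
      using st by (cases rule: open_stepE; simp)+
    then show ?thesis
      using rightward_cost_backward_le[OF K strip, of \<omega> "nat c"] backward uv Suc
      by (simp add: potential_right_half)
  qed
qed

definition vertical_in_column_0 :: "vertex \<Rightarrow> vertex \<Rightarrow> bool" where
  "vertical_in_column_0 u v \<longleftrightarrow> (vertical_edge u v \<longrightarrow> fst u = 0 \<and> fst v = 0)"

lemma column_0_path_exists: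
  assumes "\<bar>j\<bar> \<le> K"
  shows "\<exists>p. open_path K \<omega> (0, 0) (0, j) p \<and> path_length p = nat \<bar>j\<bar> \<and>
             successively vertical_in_column_0 p"
proof -
  have along: "\<exists>p. open_path K \<omega> (0, 0) (0, sgn j * int k) p \<and> path_length p = k \<and>
             successively vertical_in_column_0 p" if "int k \<le> \<bar>j\<bar>" for k
    using that
  proof (induction k)
    case 0
    show ?case
      using open_path_singleton path_length_singleton by fastforce
  next
    case (Suc k)
    then obtain p where p: "open_path K \<omega> (0, 0) (0, sgn j * int k) p" "path_length p = k"
      "successively vertical_in_column_0 p"
      by auto
    let ?v = "(0::int, sgn j * int (Suc k))"
    have "j \<noteq> 0"
      using Suc.prems by simp
    then have step: "open_step K \<omega> (0, sgn j * int k) ?v" "edge_length (0, sgn j * int k) ?v = 1"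
      using Suc.prems assms
      by (auto simp: open_step_def in_strip_def vertical_edge_def edge_length_def
          diagonal_edge_def abs_mult sgn_if)
    have "p \<noteq> []" "last p = (0, sgn j * int k)"
      using p(1) by (auto simp: open_path_def)
    then show ?case
      using p step open_path_snoc[OF p(1) step(1)]
      by (intro exI[of _ "p @ [?v]"])
        (simp add: path_length_snoc successively_append_iff vertical_in_column_0_def)
  qed
  have "sgn j * int (nat \<bar>j\<bar>) = j"
    by (simp add: sgn_mult_abs)
  with along[of "nat \<bar>j\<bar>"] show ?thesis
    by simp
qed

lemma rightward_path_exists:
  assumes "K \<ge> 1" "\<bar>j\<bar> \<le> K"
  shows "\<exists>p. open_path K \<omega> (0, 0) (int m, j) p \<and> int (path_length p) = rightward_cost K \<omega> m j \<and>
             successively vertical_in_column_0 p"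
  using assms(2)
proof (induction m arbitrary: j)
  case 0
  then show ?case
    using column_0_path_exists[of j K \<omega>] by auto
next
  case (Suc m)
  let ?v = "(int (Suc m), j)"
  have extend: "\<exists>p. open_path K \<omega> (0, 0) ?v p \<and>
                   int (path_length p) = rightward_cost K \<omega> m i + int (edge_length (int m, i) ?v) \<and>
                   successively vertical_in_column_0 p"
    if i: "\<bar>i\<bar> \<le> K" and last_step: "open_step K \<omega> (int m, i) ?v" for i
  proof -
    obtain p where p: "open_path K \<omega> (0, 0) (int m, i) p"
      "int (path_length p) = rightward_cost K \<omega> m i" "successively vertical_in_column_0 p"
      using Suc.IH[OF i] by blast
    have "p \<noteq> []" "last p = (int m, i)"
      using p(1) by (auto simp: open_path_def)
    then show ?thesis
      using p open_path_snoc[OF p(1) last_step]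
      by (intro exI[of _ "p @ [?v]"])
        (simp add: path_length_snoc successively_append_iff vertical_in_column_0_def vertical_edge_def)
  qed
  from Suc.prems assms(1) show ?case
  proof (cases rule: rightward_cost_SucE[where \<omega> = \<omega> and m = m])
    case (diagonal i)
    then show ?thesis
      using extend[of i] Suc.prems
      by (simp add: open_step_def in_strip_def diagonal_edge_def edge_length_def abs_minus_commute)
  next
    case horizontal
    then show ?thesis
      using extend[of j] Suc.prems
      by (simp add: open_step_def in_strip_def horizontal_edge_def edge_length_def diagonal_edge_def)
  qed
qed

theorem lemma3:
  fixes K n :: int and \<omega> :: config
  assumes "K \<ge> 1" and "n \<ge> 0"
  shows "\<exists>p. open_path K \<omega> (0, 0) (n, 0) p \<and>
           (\<forall>q. open_path K \<omega> (0, 0) (n, 0) q \<longrightarrow> path_length p \<le> path_length q) \<and>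
           (\<forall>i < length p - 1. vertical_edge (p ! i) (p ! Suc i) \<longrightarrow>
               fst (p ! i) = 0 \<and> fst (p ! Suc i) = 0)"
proof -
  obtain p where p: "open_path K \<omega> (0, 0) (n, 0) p"
    "int (path_length p) = rightward_cost K \<omega> (nat n) 0" "successively vertical_in_column_0 p"
    using rightward_path_exists[OF assms(1), of 0 \<omega> "nat n"] assms by auto
  have "path_length p \<le> path_length q" if "open_path K \<omega> (0, 0) (n, 0) q" for q
  proof -
    have "potential K \<omega> (n, 0) \<le> potential K \<omega> (0, 0) + int (path_length q)"
      using potential_le_path_length[OF potential_open_step[OF assms(1)] that] .
    then show ?thesis
      using p(2) assms(2) by (simp add: potential_right_half)
  qed
  moreover have "vertical_in_column_0 (p ! i) (p ! Suc i)" if "i < length p - 1" for i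
    using p(3) that by (simp add: successively_conv_nth)
  ultimately show ?thesis
    using p(1) by (auto simp: vertical_in_column_0_def)
qed

end
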